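(* Let $\Sigma$ be a set, let $1\le p<\infty$, suppose $d$ is a separating quasi-metric on $\Sigma$, $\alpha,\beta:\Sigma^+\to\mathbb{R}$ with $\alpha^p,\beta^p\in\Gamma(\Sigma)$, and let $D$ be the $\ell^p$ edit distance on $\Sigma^*$ extending $d$, $\alpha$ and $\beta$. Assume in addition that for all $a,b\in\Sigma$ and $u,v,x\in\Sigma^*$: (W1) $d^p(a,b)+\beta^p(ubv)\ge\beta^p(uav)$; (W2) $d^p(a,b)+\alpha^p(uav)\ge\alpha^p(ubv)$; (W3) $\beta^p(uv)+\beta^p(x)\ge\beta^p(uxv)$; (W4) $\alpha^p(uv)+\alpha^p(x)\ge\alpha^p(uxv)$; (W5) $\beta^p(uxv)+\alpha^p(x)\ge\beta^p(uv)$; (W6) $\alpha^p(uxv)+\beta^p(x)\ge\alpha^p(uv)$; (W7) $\alpha^p(ux)+\beta^p(xv)\ge\alpha^p(u)+\beta^p(v)$; (W8) $\beta^p(ux)+\alpha^p(xv)\ge\beta^p(u)+\alpha^p(v)$, where $\alpha(e)=\beta(e)=0$ by convention. Then $D$ is a separating quasi-metric on $\Sigma^*$.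
   Context: $\Sigma^*$ is the free monoid on $\Sigma$ (finite words, concatenation, empty word $e$), $\Sigma^+=\Sigma^*\setminus\{e\}$; for $w=w_1\cdots w_n$, $|w|=n$, $\bar w_k=w_1\cdots w_k$, $\bar w_0=e$. A quasi-metric on $X$ is a map $q:X\times X\to\mathbb{R}_{\ge0}$ with $q(x,y)=q(y,x)=0\iff x=y$ and $q(x,z)\le q(x,y)+q(y,z)$; it is separating if $q(x,y)=0$ implies $x=y$. A gap penalty over $\Sigma^+$ is a positive function $\gamma:\Sigma^+\to\mathbb{R}$ with $\gamma(u)+\gamma(v)\ge\gamma(uv)$ for all $u,v\in\Sigma^+$; $\Gamma(\Sigma)$ is the set of these. $\ell^p$ edit distance extending $d$, $\alpha$, $\beta$: for $x,y\in\Sigma^*$, $m=|x|$, $n=|y|$, $D(e,e)=0$, $D(e,\bar y_j)=\alpha(\bar y_j)$ ($1\le j\le n$), $D(\bar x_i,e)=\beta(\bar x_i)$ ($1\le i\le m$), and for $1\le i\le m$, $1\le j\le n$, \[D(\bar x_i,\bar y_j)=\Big(\min\Big\{D^p(\bar x_{i-1},\bar y_{j-1})+d^p(x_i,y_j),\ \min_{1\le k\le j}\{D^p(\bar x_i,\bar y_{j-k})+\alpha^p(y_{j-k+1}\cdots y_j)\},\ \min_{1\le k\le i}\{D^p(\bar x_{i-k},\bar y_j)+\beta^p(x_{i-k+1}\cdots x_i)\}\Big\}\Big)^{1/p},\] with $D(x,y)=D(\bar x_m,\bar y_n)$. *)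

theory Defs
  imports Main "HOL.Transcendental"
begin

definition quasi_metric :: "('a \<Rightarrow> 'a \<Rightarrow> real) \<Rightarrow> bool" where
  "quasi_metric q \<longleftrightarrow>
     (\<forall>x y. q x y \<ge> 0) \<and>
     (\<forall>x y. (q x y = 0 \<and> q y x = 0) \<longleftrightarrow> x = y) \<and>
     (\<forall>x y z. q x z \<le> q x y + q y z)"

definition separating :: "('a \<Rightarrow> 'a \<Rightarrow> real) \<Rightarrow> bool" where
  "separating q \<longleftrightarrow> (\<forall>x y. q x y = 0 \<longrightarrow> x = y)"

definition gap_penalty :: "('a list \<Rightarrow> real) \<Rightarrow> bool" where
  "gap_penalty \<gamma> \<longleftrightarrow>
     (\<forall>u. u \<noteq> [] \<longrightarrow> \<gamma> u > 0) \<and>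
     (\<forall>u v. u \<noteq> [] \<longrightarrow> v \<noteq> [] \<longrightarrow> \<gamma> u + \<gamma> v \<ge> \<gamma> (u @ v))"

definition ppow :: "('a list \<Rightarrow> real) \<Rightarrow> real \<Rightarrow> 'a list \<Rightarrow> real" where
  "ppow \<alpha> p w = (if w = [] then 0 else \<alpha> w powr p)"

function edit_dist ::
  "('a \<Rightarrow> 'a \<Rightarrow> real) \<Rightarrow> ('a list \<Rightarrow> real) \<Rightarrow> ('a list \<Rightarrow> real) \<Rightarrow> real
     \<Rightarrow> 'a list \<Rightarrow> 'a list \<Rightarrow> real" where
  "edit_dist d \<alpha> \<beta> p [] [] = 0"
| "edit_dist d \<alpha> \<beta> p [] (y # ys) = \<alpha> (y # ys)"
| "edit_dist d \<alpha> \<beta> p (x # xs) [] = \<beta> (x # xs)"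
| "edit_dist d \<alpha> \<beta> p (x # xs) (y # ys) =
     (Min (set (
        [edit_dist d \<alpha> \<beta> p (butlast (x # xs)) (butlast (y # ys)) powr p
           + d (last (x # xs)) (last (y # ys)) powr p]
      @ map (\<lambda>k. edit_dist d \<alpha> \<beta> p (x # xs) (take (length (y # ys) - k) (y # ys)) powr p
                 + \<alpha> (drop (length (y # ys) - k) (y # ys)) powr p) [1..<length (y # ys) + 1]
      @ map (\<lambda>k. edit_dist d \<alpha> \<beta> p (take (length (x # xs) - k) (x # xs)) (y # ys) powr p
                 + \<beta> (drop (length (x # xs) - k) (x # xs)) powr p) [1..<length (x # xs) + 1]
     ))) powr (1 / p)"
  by pat_completeness auto
termination
  by (relation "measure (\<lambda>(_, _, _, _, xs, ys). length xs + length ys)") auto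

end

theory Submission
  imports Defs "HOL-Analysis.Convex"
begin

text \<open>Put \<open>Dp = D powr p\<close> and fix weights \<open>c\<^sub>1, c\<^sub>2\<close> with
  \<open>(u + v) powr p \<le> c\<^sub>1 * u powr p + c\<^sub>2 * v powr p\<close> for \<open>u, v \<ge> 0\<close>. Then
  \<open>Dp x z \<le> c\<^sub>1 * Dp x y + c\<^sub>2 * Dp y z\<close>, by induction on \<open>|x| + |y| + |z|\<close>, splitting off
  the last operation of an optimal alignment. The induction only closes together with two
  companion bounds in which a gap \<open>w\<close> at the end of the middle word, extended by a tail \<open>t\<close>,
  is charged to the outer word; (W1)--(W8) are exactly the inequalities needed to merge or
  shift such gaps. Convexity of \<open>t powr p\<close> provides the weights
  \<open>c\<^sub>1 = l powr (1 - p)\<close>, \<open>c\<^sub>2 = (1 - l) powr (1 - p)\<close> for \<open>0 < l < 1\<close>, and the choice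
  \<open>l = D x y / (D x y + D y z)\<close> turns the weighted bound into the triangle inequality.
  Separation holds because a zero-cost alignment consists of substitutions \<open>a \<mapsto> b\<close> with
  \<open>d a b = 0\<close>.\<close>

lemma powr_add_le_weighted:
  fixes p l u v :: real
  assumes p: "1 \<le> p" and l: "0 < l" "l < 1" and u: "0 \<le> u" and v: "0 \<le> v"
  shows "(u + v) powr p \<le> l powr (1 - p) * u powr p + (1 - l) powr (1 - p) * v powr p"
proof -
  have one_le: "1 \<le> c powr (1 - p)" if "0 < c" "c \<le> 1" for c :: real
  proof -
    have "1 \<le> (inverse c) powr (p - 1)"
      using that p by (intro ge_one_powr_ge_zero) (auto simp: one_le_inverse_iff)
    also have "\<dots> = c powr (1 - p)"
      using that by (simp add: powr_def ln_inverse algebra_simps)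
    finally show ?thesis .
  qed
  have scale: "c * (w / c) powr p = c powr (1 - p) * w powr p" if "0 < c" "0 \<le> w" for c w :: real
    using that by (simp add: powr_divide powr_diff)
  consider "u = 0" | "v = 0" | "0 < u" "0 < v" using u v by linarith
  then show ?thesis
  proof cases
    case 1
    then show ?thesis using one_le[of "1 - l"] l v by (simp add: mult_le_cancel_right1)
  next
    case 2
    then show ?thesis using one_le[of l] l u by (simp add: mult_le_cancel_right1)
  next
    case 3
    \<comment> \<open>\<open>u + v\<close> is the convex combination of \<open>u / l\<close> and \<open>v / (1 - l)\<close> with weights \<open>l, 1 - l\<close>.\<close>
    have "(u + v) powr p = (\<lambda>x. x powr p) ((1 - (1 - l)) *\<^sub>R (u / l) + (1 - l) *\<^sub>R (v / (1 - l)))"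
      using l by simp
    also have "\<dots> \<le> (1 - (1 - l)) * (u / l) powr p + (1 - l) * (v / (1 - l)) powr p"
      by (rule convex_onD[OF powr_convex[OF p]]) (use l 3 in auto)
    also have "\<dots> = l powr (1 - p) * u powr p + (1 - l) powr (1 - p) * v powr p"
      using l u v by (simp add: scale)
    finally show ?thesis .
  qed
qed

lemma weighted_powr_split_eq:
  fixes a b p :: real
  assumes a: "0 < a" and b: "0 < b"
  shows "(a / (a + b)) powr (1 - p) * a powr p + (b / (a + b)) powr (1 - p) * b powr p
    = (a + b) powr p"
proof -
  have summand: "(c / (a + b)) powr (1 - p) * c powr p = c * (a + b) powr (p - 1)" if "0 < c" for c
  proof -
    have "(c / (a + b)) powr (1 - p) * c powr p = c powr (1 - p + p) / (a + b) powr (1 - p)"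
      using that a b by (simp add: powr_divide powr_add[symmetric])
    also have "\<dots> = c * (a + b) powr (p - 1)"
      using that a b by (simp add: powr_diff divide_inverse powr_minus[symmetric])
    finally show ?thesis .
  qed
  have "(a + b) * (a + b) powr (p - 1) = (a + b) powr p"
    using a b by (simp add: powr_add[symmetric] powr_mult_base)
  then show ?thesis using a b by (simp add: summand distrib_right)
qed
locale lp_edit_distance =
  fixes d :: "'a \<Rightarrow> 'a \<Rightarrow> real"
    and \<alpha> \<beta> :: "'a list \<Rightarrow> real"
    and p :: real
  assumes p: "1 \<le> p"
    and qm: "quasi_metric d" and sep: "separating d"
    and \<alpha>_pos: "\<And>w. w \<noteq> [] \<Longrightarrow> \<alpha> w > 0"
    and \<beta>_pos: "\<And>w. w \<noteq> [] \<Longrightarrow> \<beta> w > 0"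
    and g\<alpha>: "gap_penalty (ppow \<alpha> p)"
    and g\<beta>: "gap_penalty (ppow \<beta> p)"
    and W1: "\<And>a b u v. d a b powr p + ppow \<beta> p (u @ [b] @ v) \<ge> ppow \<beta> p (u @ [a] @ v)"
    and W2: "\<And>a b u v. d a b powr p + ppow \<alpha> p (u @ [a] @ v) \<ge> ppow \<alpha> p (u @ [b] @ v)"
    and W3: "\<And>u v x. ppow \<beta> p (u @ v) + ppow \<beta> p x \<ge> ppow \<beta> p (u @ x @ v)"
    and W4: "\<And>u v x. ppow \<alpha> p (u @ v) + ppow \<alpha> p x \<ge> ppow \<alpha> p (u @ x @ v)"
    and W5: "\<And>u v x. ppow \<beta> p (u @ x @ v) + ppow \<alpha> p x \<ge> ppow \<beta> p (u @ v)"
    and W6: "\<And>u v x. ppow \<alpha> p (u @ x @ v) + ppow \<beta> p x \<ge> ppow \<alpha> p (u @ v)"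
    and W7: "\<And>u v x. ppow \<alpha> p (u @ x) + ppow \<beta> p (x @ v) \<ge> ppow \<alpha> p u + ppow \<beta> p v"
    and W8: "\<And>u v x. ppow \<beta> p (u @ x) + ppow \<alpha> p (x @ v) \<ge> ppow \<beta> p u + ppow \<alpha> p v"
begin

declare edit_dist.simps(4)[simp del]

abbreviation D :: "'a list \<Rightarrow> 'a list \<Rightarrow> real" where
  "D \<equiv> edit_dist d \<alpha> \<beta> p"

definition Dp :: "'a list \<Rightarrow> 'a list \<Rightarrow> real" where
  "Dp x y = D x y powr p"

lemma d_nonneg: "0 \<le> d a b"
  using qm unfolding quasi_metric_def by blast

lemma d_self: "d a a = 0"
  using qm unfolding quasi_metric_def by blast

lemma d_triangle: "d a c \<le> d a b + d b c"
  using qm unfolding quasi_metric_def by blast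

lemma ppow_nonneg: "0 \<le> ppow f p w"
  by (simp add: ppow_def)

lemma ppow_Nil: "ppow f p [] = 0"
  by (simp add: ppow_def)

lemma ppow_\<alpha>_pos: "w \<noteq> [] \<Longrightarrow> 0 < ppow \<alpha> p w"
  using \<alpha>_pos[of w] by (simp add: ppow_def)

lemma ppow_\<beta>_pos: "w \<noteq> [] \<Longrightarrow> 0 < ppow \<beta> p w"
  using \<beta>_pos[of w] by (simp add: ppow_def)

lemma D_nonneg: "0 \<le> D x y"
proof (cases x)
  case Nil
  then show ?thesis by (cases y) (auto intro: less_imp_le \<alpha>_pos)
next
  case (Cons a xs)
  then show ?thesis
    by (cases y) (auto intro: less_imp_le \<beta>_pos simp: edit_dist.simps(4)[of d \<alpha> \<beta> p a xs])
qed

lemma Dp_nonneg: "0 \<le> Dp x y"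
  by (simp add: Dp_def)

lemma D_eq_root_Dp: "D x y = Dp x y powr (1 / p)"
  using D_nonneg[of x y] p by (simp add: Dp_def powr_powr)

lemma Dp_Nil_Nil: "Dp [] [] = 0"
  by (simp add: Dp_def)

lemma Dp_Nil_left: "Dp [] y = ppow \<alpha> p y"
  by (cases y) (auto simp: Dp_def ppow_def)

lemma Dp_Nil_right: "Dp x [] = ppow \<beta> p x"
  by (cases x) (auto simp: Dp_def ppow_def)

lemma Dp_rec:
  assumes "x \<noteq> []" "y \<noteq> []"
  shows "Dp x y = Min (set ([Dp (butlast x) (butlast y) + d (last x) (last y) powr p]
      @ map (\<lambda>k. Dp x (take (length y - k) y) + \<alpha> (drop (length y - k) y) powr p) [1..<length y + 1]
      @ map (\<lambda>k. Dp (take (length x - k) x) y + \<beta> (drop (length x - k) x) powr p) [1..<length x + 1]))"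
    (is "_ = ?M")
proof -
  obtain a xs b ys where x: "x = a # xs" and y: "y = b # ys"
    using assms by (meson list.exhaust)
  have "D x y = ?M powr (1 / p)"
    unfolding Dp_def x y by (rule edit_dist.simps(4))
  moreover have "0 \<le> ?M"
    by (subst Min_ge_iff) (auto simp: Dp_def)
  ultimately show ?thesis
    using p by (simp add: Dp_def powr_powr)
qed

lemma Dp_snoc_snoc_le: "Dp (x @ [a]) (y @ [b]) \<le> Dp x y + d a b powr p"
  by (subst Dp_rec) auto

lemma Dp_append_right_le: "Dp x (y @ w) \<le> Dp x y + ppow \<alpha> p w"
proof (cases "w = [] \<or> x = []")
  case True
  then show ?thesis
    using g\<alpha> by (cases "y = []") (auto simp: Dp_Nil_left gap_penalty_def ppow_def)
next
  case False
  then have x: "x \<noteq> []" and yw: "y @ w \<noteq> []" and "length w \<in> set [1..<length (y @ w) + 1]"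
    by (auto simp: Suc_le_eq)
  then have "Dp x (y @ w) \<le> Dp x y + \<alpha> w powr p"
    unfolding Dp_rec[OF x yw] by (intro Min_le) (auto intro!: image_eqI[where x = "length w"])
  with False show ?thesis
    by (simp add: ppow_def)
qed

lemma Dp_append_left_le: "Dp (x @ w) y \<le> Dp x y + ppow \<beta> p w"
proof (cases "w = [] \<or> y = []")
  case True
  then show ?thesis
    using g\<beta> by (cases "x = []") (auto simp: Dp_Nil_right gap_penalty_def ppow_def)
next
  case False
  then have xw: "x @ w \<noteq> []" and y: "y \<noteq> []" and "length w \<in> set [1..<length (x @ w) + 1]"
    by (auto simp: Suc_le_eq)
  then have "Dp (x @ w) y \<le> Dp x y + \<beta> w powr p"
    unfolding Dp_rec[OF xw y] by (intro Min_le) (auto intro!: image_eqI[where x = "length w"])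
  with False show ?thesis
    by (simp add: ppow_def)
qed

lemma Dp_last_operation:
  assumes "x \<noteq> []" "y \<noteq> []"
  obtains (sub) x' a y' b where "x = x' @ [a]" "y = y' @ [b]" "Dp x y = Dp x' y' + d a b powr p"
  | (ins) y' w where "w \<noteq> []" "y = y' @ w" "Dp x y = Dp x y' + ppow \<alpha> p w"
  | (del) x' v where "v \<noteq> []" "x = x' @ v" "Dp x y = Dp x' y + ppow \<beta> p v"
proof -
  let ?L = "[Dp (butlast x) (butlast y) + d (last x) (last y) powr p]
      @ map (\<lambda>k. Dp x (take (length y - k) y) + \<alpha> (drop (length y - k) y) powr p) [1..<length y + 1]
      @ map (\<lambda>k. Dp (take (length x - k) x) y + \<beta> (drop (length x - k) x) powr p) [1..<length x + 1]"
  have "Dp x y \<in> set ?L"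
    unfolding Dp_rec[OF assms] by (rule Min_in) auto
  then have "Dp x y = Dp (butlast x) (butlast y) + d (last x) (last y) powr p
    \<or> (\<exists>k. 1 \<le> k \<and> k \<le> length y \<and>
        Dp x y = Dp x (take (length y - k) y) + \<alpha> (drop (length y - k) y) powr p)
    \<or> (\<exists>k. 1 \<le> k \<and> k \<le> length x \<and>
        Dp x y = Dp (take (length x - k) x) y + \<beta> (drop (length x - k) x) powr p)"
    by (simp only: set_append set_map set_upt set_simps) auto
  then consider (1) "Dp x y = Dp (butlast x) (butlast y) + d (last x) (last y) powr p"
    | (2) k where "k \<in> {1..length y}"
        "Dp x y = Dp x (take (length y - k) y) + \<alpha> (drop (length y - k) y) powr p"
    | (3) k where "k \<in> {1..length x}"
        "Dp x y = Dp (take (length x - k) x) y + \<beta> (drop (length x - k) x) powr p"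
    by auto
  then show ?thesis
  proof cases
    case 1
    then show ?thesis using sub[of "butlast x" "last x" "butlast y" "last y"] assms by simp
  next
    case (2 k)
    then show ?thesis using ins[of "drop (length y - k) y" "take (length y - k) y"]
      by (auto simp: ppow_def)
  next
    case (3 k)
    then show ?thesis using del[of "drop (length x - k) x" "take (length x - k) x"]
      by (auto simp: ppow_def)
  qed
qed

lemma Dp_self: "Dp x x = 0"
proof (induction x rule: rev_induct)
  case Nil
  then show ?case by (rule Dp_Nil_Nil)
next
  case (snoc a xs)
  then show ?case
    using Dp_snoc_snoc_le[of xs a xs a] Dp_nonneg[of "xs @ [a]" "xs @ [a]"] p by (simp add: d_self)
qed

lemma Dp_eq_0_imp_eq: "Dp x y = 0 \<Longrightarrow> x = y"
proof (induction "length x + length y" arbitrary: x y rule: less_induct)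
  case less
  consider "x = []" | "y = []" | "x \<noteq> []" "y \<noteq> []" by blast
  then show ?case
  proof cases
    case 1
    then show ?thesis using less.prems ppow_\<alpha>_pos[of y] by (cases "y = []") (auto simp: Dp_Nil_left)
  next
    case 2
    then show ?thesis using less.prems ppow_\<beta>_pos[of x] by (cases "x = []") (auto simp: Dp_Nil_right)
  next
    case 3
    then show ?thesis
    proof (cases rule: Dp_last_operation)
      case (sub x' a y' b)
      then have "Dp x' y' = 0" and "d a b powr p = 0"
        using less.prems Dp_nonneg[of x' y'] powr_ge_zero[of "d a b" p] by linarith+
      then have "x' = y'" and "a = b"
        using less.hyps[of x' y'] sub sep by (auto simp: separating_def)
      with sub show ?thesis by simp
    next
      case (ins y' w)
      then show ?thesis using less.prems Dp_nonneg[of x y'] ppow_\<alpha>_pos[of w] by simp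
    next
      case (del x' v)
      then show ?thesis using less.prems Dp_nonneg[of x' y] ppow_\<beta>_pos[of v] by simp
    qed
  qed
qed

lemma D_eq_0_iff: "D x y = 0 \<longleftrightarrow> x = y"
proof
  assume "D x y = 0"
  then show "x = y" by (intro Dp_eq_0_imp_eq) (simp add: Dp_def)
next
  assume "x = y"
  then show "D x y = 0" using Dp_self[of x] p by (simp add: D_eq_root_Dp)
qed

context
  fixes c\<^sub>1 c\<^sub>2 :: real
  assumes weights: "\<And>u v. 0 \<le> u \<Longrightarrow> 0 \<le> v \<Longrightarrow> (u + v) powr p \<le> c\<^sub>1 * u powr p + c\<^sub>2 * v powr p"
begin

lemma le_c\<^sub>1_mult: "0 \<le> a \<Longrightarrow> a \<le> c\<^sub>1 * a"
  using weights[of 1 0] mult_right_mono[of 1 c\<^sub>1 a] by simp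

lemma le_c\<^sub>2_mult: "0 \<le> a \<Longrightarrow> a \<le> c\<^sub>2 * a"
  using weights[of 0 1] mult_right_mono[of 1 c\<^sub>2 a] by simp

lemma insertion_bound_step_del:
  assumes IHI: "\<And>x y w z t. length x + length y + length w + length z < n \<Longrightarrow>
      Dp x (z @ t) \<le> c\<^sub>1 * Dp x y + ppow \<alpha> p (w @ t) + c\<^sub>2 * Dp (y @ w) z"
    and IHD: "\<And>x y r z s. length x + length y + length r + length z < n \<Longrightarrow>
      Dp (x @ s) z \<le> c\<^sub>1 * Dp x (y @ r) + ppow \<beta> p (r @ s) + c\<^sub>2 * Dp y z"
    and n: "length x + length y + length w + length z = n" and w: "w \<noteq> []"
    and v: "v \<noteq> []" "y @ w = y' @ v" and Dp_yw: "Dp (y @ w) z = Dp y' z + ppow \<beta> p v"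
  shows "Dp x (z @ t) \<le> c\<^sub>1 * Dp x y + ppow \<alpha> p (w @ t) + c\<^sub>2 * Dp (y @ w) z"
proof -
  obtain us where "y' = y @ us \<and> w = us @ v \<or> y = y' @ us \<and> us @ w = v"
    using v(2) append_eq_append_conv2[of y w y' v] by blast
  then consider (inside) us where "y' = y @ us" "w = us @ v"
    | (across) us where "y = y' @ us" "us @ w = v" "us \<noteq> []"
    using w by fastforce
  then show ?thesis
  proof cases
    case (inside us)
    have "Dp x (z @ t) \<le> c\<^sub>1 * Dp x y + ppow \<alpha> p (us @ t) + c\<^sub>2 * Dp (y @ us) z"
      using IHI[of x y us z t] n inside v(1) by (cases v) auto
    moreover have "ppow \<alpha> p (us @ t) \<le> ppow \<alpha> p (us @ v @ t) + ppow \<beta> p v"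
      by (rule W6)
    moreover have "ppow \<beta> p v \<le> c\<^sub>2 * ppow \<beta> p v"
      by (rule le_c\<^sub>2_mult[OF ppow_nonneg])
    ultimately show ?thesis
      using Dp_yw inside by (simp add: distrib_left; linarith)
  next
    case (across us)
    have "Dp x (z @ t) \<le> Dp x z + ppow \<alpha> p t"
      by (rule Dp_append_right_le)
    moreover have "Dp x z \<le> c\<^sub>1 * Dp x (y' @ us) + ppow \<beta> p us + c\<^sub>2 * Dp y' z"
      using IHD[of x y' us z "[]"] n across w by (cases w) auto
    moreover have "ppow \<beta> p us + ppow \<alpha> p t \<le> ppow \<beta> p (us @ w) + ppow \<alpha> p (w @ t)"
      by (rule W8)
    moreover have "ppow \<beta> p (us @ w) \<le> c\<^sub>2 * ppow \<beta> p (us @ w)"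
      by (rule le_c\<^sub>2_mult[OF ppow_nonneg])
    ultimately show ?thesis
      using Dp_yw across by (simp add: distrib_left; linarith)
  qed
qed

lemma insertion_bound_step:
  assumes IHI: "\<And>x y w z t. length x + length y + length w + length z < n \<Longrightarrow>
      Dp x (z @ t) \<le> c\<^sub>1 * Dp x y + ppow \<alpha> p (w @ t) + c\<^sub>2 * Dp (y @ w) z"
    and IHD: "\<And>x y r z s. length x + length y + length r + length z < n \<Longrightarrow>
      Dp (x @ s) z \<le> c\<^sub>1 * Dp x (y @ r) + ppow \<beta> p (r @ s) + c\<^sub>2 * Dp y z"
    and n: "length x + length y + length w + length z = n" and w: "w \<noteq> []"
  shows "Dp x (z @ t) \<le> c\<^sub>1 * Dp x y + ppow \<alpha> p (w @ t) + c\<^sub>2 * Dp (y @ w) z"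
proof (cases "z = []")
  case True
  have "Dp x t \<le> Dp x [] + ppow \<alpha> p t"
    using Dp_append_right_le[of x "[]" t] by simp
  moreover have "Dp x [] \<le> c\<^sub>1 * Dp x y + ppow \<beta> p y"
    using IHD[of x "[]" y "[]" "[]"] n w True by (cases w) (auto simp: Dp_Nil_Nil)
  moreover have "ppow \<beta> p y + ppow \<alpha> p t \<le> ppow \<beta> p (y @ w) + ppow \<alpha> p (w @ t)"
    by (rule W8)
  moreover have "ppow \<beta> p (y @ w) \<le> c\<^sub>2 * ppow \<beta> p (y @ w)"
    by (rule le_c\<^sub>2_mult[OF ppow_nonneg])
  ultimately show ?thesis
    using True by (simp add: Dp_Nil_right)
next
  case False
  have "y @ w \<noteq> []" using w by simp
  then show ?thesis
  using False proof (cases rule: Dp_last_operation)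
    case (sub y' b z' c)
    obtain w' where w': "w = w' @ [b]" "y' = y @ w'"
      using sub(1) w by (cases w rule: rev_cases) auto
    have "Dp x (z' @ [c] @ t) \<le> c\<^sub>1 * Dp x y + ppow \<alpha> p (w' @ [c] @ t) + c\<^sub>2 * Dp (y @ w') z'"
      using IHI[of x y w' z' "[c] @ t"] n sub(2) w' by simp
    moreover have "ppow \<alpha> p (w' @ [c] @ t) \<le> d b c powr p + ppow \<alpha> p (w' @ [b] @ t)"
      by (rule W2)
    moreover have "d b c powr p \<le> c\<^sub>2 * d b c powr p"
      by (rule le_c\<^sub>2_mult) simp
    ultimately show ?thesis
      using sub w' by (simp add: distrib_left; linarith)
  next
    case (ins z' u)
    have "Dp x (z' @ u @ t) \<le> c\<^sub>1 * Dp x y + ppow \<alpha> p (w @ u @ t) + c\<^sub>2 * Dp (y @ w) z'"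
      using IHI[of x y w z' "u @ t"] n ins by (cases u) auto
    moreover have "ppow \<alpha> p (w @ u @ t) \<le> ppow \<alpha> p (w @ t) + ppow \<alpha> p u"
      by (rule W4)
    moreover have "ppow \<alpha> p u \<le> c\<^sub>2 * ppow \<alpha> p u"
      by (rule le_c\<^sub>2_mult[OF ppow_nonneg])
    ultimately show ?thesis
      using ins by (simp add: distrib_left; linarith)
  next
    case (del y' v)
    then show ?thesis
      by (intro insertion_bound_step_del[OF IHI IHD n w])
  qed
qed

lemma deletion_bound_step_ins:
  assumes IHI: "\<And>x y w z t. length x + length y + length w + length z < n \<Longrightarrow>
      Dp x (z @ t) \<le> c\<^sub>1 * Dp x y + ppow \<alpha> p (w @ t) + c\<^sub>2 * Dp (y @ w) z"
    and IHD: "\<And>x y r z s. length x + length y + length r + length z < n \<Longrightarrow>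
      Dp (x @ s) z \<le> c\<^sub>1 * Dp x (y @ r) + ppow \<beta> p (r @ s) + c\<^sub>2 * Dp y z"
    and n: "length x + length y + length r + length z = n" and r: "r \<noteq> []"
    and u: "u \<noteq> []" "y @ r = y' @ u" and Dp_yr: "Dp x (y @ r) = Dp x y' + ppow \<alpha> p u"
  shows "Dp (x @ s) z \<le> c\<^sub>1 * Dp x (y @ r) + ppow \<beta> p (r @ s) + c\<^sub>2 * Dp y z"
proof -
  obtain us where "y' = y @ us \<and> r = us @ u \<or> y = y' @ us \<and> us @ r = u"
    using u(2) append_eq_append_conv2[of y r y' u] by blast
  then consider (inside) us where "y' = y @ us" "r = us @ u"
    | (across) us where "y = y' @ us" "us @ r = u" "us \<noteq> []"
    using r by fastforce
  then show ?thesis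
  proof cases
    case (inside us)
    have "Dp (x @ s) z \<le> c\<^sub>1 * Dp x (y @ us) + ppow \<beta> p (us @ s) + c\<^sub>2 * Dp y z"
      using IHD[of x y us z s] n inside u(1) by (cases u) auto
    moreover have "ppow \<beta> p (us @ s) \<le> ppow \<beta> p (us @ u @ s) + ppow \<alpha> p u"
      by (rule W5)
    moreover have "ppow \<alpha> p u \<le> c\<^sub>1 * ppow \<alpha> p u"
      by (rule le_c\<^sub>1_mult[OF ppow_nonneg])
    ultimately show ?thesis
      using Dp_yr inside by (simp add: distrib_left; linarith)
  next
    case (across us)
    have "Dp (x @ s) z \<le> Dp x z + ppow \<beta> p s"
      by (rule Dp_append_left_le)
    moreover have "Dp x z \<le> c\<^sub>1 * Dp x y' + ppow \<alpha> p us + c\<^sub>2 * Dp (y' @ us) z"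
      using IHI[of x y' us z "[]"] n across r by (cases r) auto
    moreover have "ppow \<alpha> p us + ppow \<beta> p s \<le> ppow \<alpha> p (us @ r) + ppow \<beta> p (r @ s)"
      by (rule W7)
    moreover have "ppow \<alpha> p (us @ r) \<le> c\<^sub>1 * ppow \<alpha> p (us @ r)"
      by (rule le_c\<^sub>1_mult[OF ppow_nonneg])
    ultimately show ?thesis
      using Dp_yr across by (simp add: distrib_left; linarith)
  qed
qed

lemma deletion_bound_step:
  assumes IHI: "\<And>x y w z t. length x + length y + length w + length z < n \<Longrightarrow>
      Dp x (z @ t) \<le> c\<^sub>1 * Dp x y + ppow \<alpha> p (w @ t) + c\<^sub>2 * Dp (y @ w) z"
    and IHD: "\<And>x y r z s. length x + length y + length r + length z < n \<Longrightarrow>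
      Dp (x @ s) z \<le> c\<^sub>1 * Dp x (y @ r) + ppow \<beta> p (r @ s) + c\<^sub>2 * Dp y z"
    and n: "length x + length y + length r + length z = n" and r: "r \<noteq> []"
  shows "Dp (x @ s) z \<le> c\<^sub>1 * Dp x (y @ r) + ppow \<beta> p (r @ s) + c\<^sub>2 * Dp y z"
proof (cases "x = []")
  case True
  have "Dp s z \<le> Dp [] z + ppow \<beta> p s"
    using Dp_append_left_le[of "[]" s z] by simp
  moreover have "Dp [] z \<le> ppow \<alpha> p y + c\<^sub>2 * Dp y z"
    using IHI[of "[]" "[]" y z "[]"] n r True by (cases r) (auto simp: Dp_Nil_Nil)
  moreover have "ppow \<alpha> p y + ppow \<beta> p s \<le> ppow \<alpha> p (y @ r) + ppow \<beta> p (r @ s)"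
    by (rule W7)
  moreover have "ppow \<alpha> p (y @ r) \<le> c\<^sub>1 * ppow \<alpha> p (y @ r)"
    by (rule le_c\<^sub>1_mult[OF ppow_nonneg])
  ultimately show ?thesis
    using True by (simp add: Dp_Nil_left)
next
  case False
  have "y @ r \<noteq> []" using r by simp
  with False show ?thesis
  proof (cases rule: Dp_last_operation)
    case (sub x' a y' b)
    obtain r' where r': "r = r' @ [b]" "y' = y @ r'"
      using sub(2) r by (cases r rule: rev_cases) auto
    have "Dp (x' @ [a] @ s) z \<le> c\<^sub>1 * Dp x' (y @ r') + ppow \<beta> p (r' @ [a] @ s) + c\<^sub>2 * Dp y z"
      using IHD[of x' y r' z "[a] @ s"] n sub(1) r' by simp
    moreover have "ppow \<beta> p (r' @ [a] @ s) \<le> d a b powr p + ppow \<beta> p (r' @ [b] @ s)"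
      by (rule W1)
    moreover have "d a b powr p \<le> c\<^sub>1 * d a b powr p"
      by (rule le_c\<^sub>1_mult) simp
    ultimately show ?thesis
      using sub r' by (simp add: distrib_left; linarith)
  next
    case (del x' v)
    have "Dp (x' @ v @ s) z \<le> c\<^sub>1 * Dp x' (y @ r) + ppow \<beta> p (r @ v @ s) + c\<^sub>2 * Dp y z"
      using IHD[of x' y r z "v @ s"] n del by (cases v) auto
    moreover have "ppow \<beta> p (r @ v @ s) \<le> ppow \<beta> p (r @ s) + ppow \<beta> p v"
      by (rule W3)
    moreover have "ppow \<beta> p v \<le> c\<^sub>1 * ppow \<beta> p v"
      by (rule le_c\<^sub>1_mult[OF ppow_nonneg])
    ultimately show ?thesis
      using del by (simp add: distrib_left; linarith)
  next
    case (ins y' u)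
    then show ?thesis
      by (intro deletion_bound_step_ins[OF IHI IHD n r])
  qed
qed

lemma triangle_bound_step_sub:
  assumes IHG: "\<And>x y z. length x + length y + length z < n \<Longrightarrow>
      Dp x z \<le> c\<^sub>1 * Dp x y + c\<^sub>2 * Dp y z"
    and DB: "\<And>x y r z s. length x + length y + length r + length z = n \<Longrightarrow> r \<noteq> [] \<Longrightarrow>
      Dp (x @ s) z \<le> c\<^sub>1 * Dp x (y @ r) + ppow \<beta> p (r @ s) + c\<^sub>2 * Dp y z"
    and n: "length x + length y + length z = n" and z: "z \<noteq> []"
    and xy: "x = x' @ [a]" "y = y' @ [b]" "Dp x y = Dp x' y' + d a b powr p"
  shows "Dp x z \<le> c\<^sub>1 * Dp x y + c\<^sub>2 * Dp y z"
proof -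
  have "y \<noteq> []" using xy by simp
  then show ?thesis
  using z proof (cases rule: Dp_last_operation)
    case (sub y'' b' z' c)
    then have y'': "y'' = y'" "b' = b" using xy by simp_all
    have "Dp x z \<le> Dp x' z' + d a c powr p"
      using Dp_snoc_snoc_le[of x' a z' c] sub xy by simp
    moreover have "Dp x' z' \<le> c\<^sub>1 * Dp x' y' + c\<^sub>2 * Dp y' z'"
      using IHG[of x' y' z'] n sub xy by simp
    moreover have "d a c powr p \<le> (d a b + d b c) powr p"
      using p d_triangle[of a c b] d_nonneg[of a c] by (intro powr_mono2) auto
    moreover have "(d a b + d b c) powr p \<le> c\<^sub>1 * d a b powr p + c\<^sub>2 * d b c powr p"
      by (intro weights d_nonneg)
    ultimately show ?thesis
      using sub y'' xy by (simp add: distrib_left; linarith)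
  next
    case (ins z' u)
    have "Dp x z \<le> Dp x z' + ppow \<alpha> p u"
      using Dp_append_right_le[of x z' u] ins by simp
    moreover have "Dp x z' \<le> c\<^sub>1 * Dp x y + c\<^sub>2 * Dp y z'"
      using IHG[of x y z'] n ins by (cases u) auto
    moreover have "ppow \<alpha> p u \<le> c\<^sub>2 * ppow \<alpha> p u"
      by (rule le_c\<^sub>2_mult[OF ppow_nonneg])
    ultimately show ?thesis
      using ins by (simp add: distrib_left; linarith)
  next
    case (del y'' r)
    have "Dp x z \<le> c\<^sub>1 * Dp x (y'' @ r) + ppow \<beta> p r + c\<^sub>2 * Dp y'' z"
      using DB[of x y'' r z "[]"] n del by simp
    moreover have "ppow \<beta> p r \<le> c\<^sub>2 * ppow \<beta> p r"
      by (rule le_c\<^sub>2_mult[OF ppow_nonneg])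
    ultimately show ?thesis
      using del by (simp add: distrib_left; linarith)
  qed
qed

lemma triangle_bound_step:
  assumes IHG: "\<And>x y z. length x + length y + length z < n \<Longrightarrow>
      Dp x z \<le> c\<^sub>1 * Dp x y + c\<^sub>2 * Dp y z"
    and IB: "\<And>x y w z t. length x + length y + length w + length z = n \<Longrightarrow> w \<noteq> [] \<Longrightarrow>
      Dp x (z @ t) \<le> c\<^sub>1 * Dp x y + ppow \<alpha> p (w @ t) + c\<^sub>2 * Dp (y @ w) z"
    and DB: "\<And>x y r z s. length x + length y + length r + length z = n \<Longrightarrow> r \<noteq> [] \<Longrightarrow>
      Dp (x @ s) z \<le> c\<^sub>1 * Dp x (y @ r) + ppow \<beta> p (r @ s) + c\<^sub>2 * Dp y z"
    and n: "length x + length y + length z = n"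
  shows "Dp x z \<le> c\<^sub>1 * Dp x y + c\<^sub>2 * Dp y z"
proof -
  consider "y = []" | "x = []" "y \<noteq> []" | "z = []" "y \<noteq> []" | "x \<noteq> []" "y \<noteq> []" "z \<noteq> []"
    by blast
  then show ?thesis
  proof cases
    case 1
    then show ?thesis
      using Dp_append_right_le[of x "[]" z] le_c\<^sub>1_mult[OF Dp_nonneg, of x "[]"]
        le_c\<^sub>2_mult[OF ppow_nonneg, of \<alpha> z] by (simp add: Dp_Nil_left)
  next
    case 2
    then show ?thesis
      using IB[of "[]" "[]" y z "[]"] n le_c\<^sub>1_mult[OF ppow_nonneg, of \<alpha> y]
      by (simp add: ppow_Nil Dp_Nil_left)
  next
    case 3
    then show ?thesis
      using DB[of x "[]" y "[]" "[]"] n le_c\<^sub>2_mult[OF ppow_nonneg, of \<beta> y]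
      by (simp add: ppow_Nil Dp_Nil_right)
  next
    case 4
    then show ?thesis
    proof (cases rule: Dp_last_operation[of x y])
      case (sub x' a y' b)
      then show ?thesis by (intro triangle_bound_step_sub[OF IHG DB n \<open>z \<noteq> []\<close>])
    next
      case (ins y' w)
      have "Dp x z \<le> c\<^sub>1 * Dp x y' + ppow \<alpha> p w + c\<^sub>2 * Dp (y' @ w) z"
        using IB[of x y' w z "[]"] n ins by simp
      moreover have "ppow \<alpha> p w \<le> c\<^sub>1 * ppow \<alpha> p w"
        by (rule le_c\<^sub>1_mult[OF ppow_nonneg])
      ultimately show ?thesis
        using ins by (simp add: distrib_left; linarith)
    next
      case (del x' v)
      have "Dp x z \<le> Dp x' z + ppow \<beta> p v"
        using Dp_append_left_le[of x' v z] del by simp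
      moreover have "Dp x' z \<le> c\<^sub>1 * Dp x' y + c\<^sub>2 * Dp y z"
        using IHG[of x' y z] n del by (cases v) auto
      moreover have "ppow \<beta> p v \<le> c\<^sub>1 * ppow \<beta> p v"
        by (rule le_c\<^sub>1_mult[OF ppow_nonneg])
      ultimately show ?thesis
        using del by (simp add: distrib_left; linarith)
    qed
  qed
qed

lemma weighted_bounds:
  "(\<forall>x y z. length x + length y + length z = n \<longrightarrow> Dp x z \<le> c\<^sub>1 * Dp x y + c\<^sub>2 * Dp y z)
   \<and> (\<forall>x y w z t. length x + length y + length w + length z = n \<longrightarrow>
        Dp x (z @ t) \<le> c\<^sub>1 * Dp x y + ppow \<alpha> p (w @ t) + c\<^sub>2 * Dp (y @ w) z)
   \<and> (\<forall>x y r z s. length x + length y + length r + length z = n \<longrightarrow>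
        Dp (x @ s) z \<le> c\<^sub>1 * Dp x (y @ r) + ppow \<beta> p (r @ s) + c\<^sub>2 * Dp y z)"
proof (induction n rule: less_induct)
  case (less n)
  have IHG: "Dp x z \<le> c\<^sub>1 * Dp x y + c\<^sub>2 * Dp y z"
    if "length x + length y + length z < n" for x y z
    using less.IH[OF that] by blast
  have IHI: "Dp x (z @ t) \<le> c\<^sub>1 * Dp x y + ppow \<alpha> p (w @ t) + c\<^sub>2 * Dp (y @ w) z"
    if "length x + length y + length w + length z < n" for x y w z t
    using less.IH[OF that] by blast
  have IHD: "Dp (x @ s) z \<le> c\<^sub>1 * Dp x (y @ r) + ppow \<beta> p (r @ s) + c\<^sub>2 * Dp y z"
    if "length x + length y + length r + length z < n" for x y r z s
    using less.IH[OF that] by blast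
  note IB = insertion_bound_step[OF IHI IHD] and DB = deletion_bound_step[OF IHI IHD]
  have G: "Dp x z \<le> c\<^sub>1 * Dp x y + c\<^sub>2 * Dp y z"
    if "length x + length y + length z = n" for x y z
    by (rule triangle_bound_step[OF IHG IB DB that])
  have "Dp x (z @ t) \<le> c\<^sub>1 * Dp x y + ppow \<alpha> p (w @ t) + c\<^sub>2 * Dp (y @ w) z"
    if "length x + length y + length w + length z = n" for x y w z t
  proof (cases "w = []")
    case True
    then show ?thesis
      using Dp_append_right_le[of x z t] G[of x y z] that by simp
  qed (use IB that in blast)
  moreover have "Dp (x @ s) z \<le> c\<^sub>1 * Dp x (y @ r) + ppow \<beta> p (r @ s) + c\<^sub>2 * Dp y z"
    if "length x + length y + length r + length z = n" for x y r z s
  proof (cases "r = []")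
    case True
    then show ?thesis
      using Dp_append_left_le[of x s z] G[of x y z] that by simp
  qed (use DB that in blast)
  ultimately show ?case
    using G by blast
qed

lemma Dp_weighted_triangle: "Dp x z \<le> c\<^sub>1 * Dp x y + c\<^sub>2 * Dp y z"
  using weighted_bounds[of "length x + length y + length z"] by blast

end

lemma D_triangle: "D x z \<le> D x y + D y z"
proof (cases "x = y \<or> y = z")
  case True
  then show ?thesis
    using D_eq_0_iff D_nonneg by auto
next
  case False
  define A B where "A = D x y" and "B = D y z"
  have A: "0 < A" and B: "0 < B"
    using False D_nonneg[of x y] D_nonneg[of y z] D_eq_0_iff unfolding A_def B_def
    by (metis less_eq_real_def)+
  define l where "l = A / (A + B)"
  have l: "0 < l" "l < 1" and one_minus_l: "1 - l = B / (A + B)"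
    using A B unfolding l_def by (auto simp: field_simps)
  have "Dp x z \<le> l powr (1 - p) * Dp x y + (1 - l) powr (1 - p) * Dp y z"
    by (rule Dp_weighted_triangle) (use powr_add_le_weighted[OF p l] in blast)
  also have "\<dots> = (A + B) powr p"
    unfolding Dp_def A_def[symmetric] B_def[symmetric] one_minus_l unfolding l_def
    by (rule weighted_powr_split_eq[OF A B])
  finally have "Dp x z powr (1 / p) \<le> ((A + B) powr p) powr (1 / p)"
    using p by (intro powr_mono2) (auto simp: Dp_nonneg)
  also have "\<dots> = A + B"
    using p A B by (simp add: powr_powr)
  finally show ?thesis
    by (simp add: D_eq_root_Dp A_def B_def)
qed

end

theorem theoremA1:
  fixes d :: "'a \<Rightarrow> 'a \<Rightarrow> real"
    and \<alpha> \<beta> :: "'a list \<Rightarrow> real"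
    and p :: real
  assumes p: "1 \<le> p"
    and qm: "quasi_metric d" and sep: "separating d"
    and \<alpha>_pos: "\<And>w. w \<noteq> [] \<Longrightarrow> \<alpha> w > 0"
    and \<beta>_pos: "\<And>w. w \<noteq> [] \<Longrightarrow> \<beta> w > 0"
    and g\<alpha>: "gap_penalty (ppow \<alpha> p)"
    and g\<beta>: "gap_penalty (ppow \<beta> p)"
    and W1: "\<And>a b u v. d a b powr p + ppow \<beta> p (u @ [b] @ v) \<ge> ppow \<beta> p (u @ [a] @ v)"
    and W2: "\<And>a b u v. d a b powr p + ppow \<alpha> p (u @ [a] @ v) \<ge> ppow \<alpha> p (u @ [b] @ v)"
    and W3: "\<And>u v x. ppow \<beta> p (u @ v) + ppow \<beta> p x \<ge> ppow \<beta> p (u @ x @ v)"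
    and W4: "\<And>u v x. ppow \<alpha> p (u @ v) + ppow \<alpha> p x \<ge> ppow \<alpha> p (u @ x @ v)"
    and W5: "\<And>u v x. ppow \<beta> p (u @ x @ v) + ppow \<alpha> p x \<ge> ppow \<beta> p (u @ v)"
    and W6: "\<And>u v x. ppow \<alpha> p (u @ x @ v) + ppow \<beta> p x \<ge> ppow \<alpha> p (u @ v)"
    and W7: "\<And>u v x. ppow \<alpha> p (u @ x) + ppow \<beta> p (x @ v) \<ge> ppow \<alpha> p u + ppow \<beta> p v"
    and W8: "\<And>u v x. ppow \<beta> p (u @ x) + ppow \<alpha> p (x @ v) \<ge> ppow \<beta> p u + ppow \<alpha> p v"
  shows "quasi_metric (edit_dist d \<alpha> \<beta> p) \<and> separating (edit_dist d \<alpha> \<beta> p)"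
proof -
  interpret lp_edit_distance d \<alpha> \<beta> p
    by unfold_locales (fact assms)+
  show ?thesis
    unfolding quasi_metric_def separating_def using D_nonneg D_eq_0_iff D_triangle by blast
qed

end
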